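(* There exist a finite-horizon MDP $M^\star$ with stochastic transitions and a data-collection policy $\pi_{\mathcal{D}}$ such that: (1) there is a model $M \neq M^\star$ whose expected multi-step reward-prediction loss (i.e., the loss in the limit of infinitely many data trajectories) is strictly smaller than that of the true model $M^\star$; and (2) this model $M$ gives a wrong evaluation to some policy $\pi$, i.e., $J_M(\pi) \neq J_{M^\star}(\pi)$.
   Context: A finite-horizon MDP with horizon $H$ has a state space $\mathcal{S}$, an action space $\mathcal{A}$, a fixed initial state $s_1$, transition kernel $P^\star:\mathcal{S}\times\mathcal{A}\to\Delta(\mathcal{S})$ and reward function $R^\star:\mathcal{S}\times\mathcal{A}\to[0,R_{\max}]$. For a model $M=(P,R)$ (a transition kernel and reward function on the same $\mathcal{S},\mathcal{A}$) and a policy $\pi$, $J_M(\pi)=\mathbb{E}_{M,\pi}[\sum_{h=1}^H r_h]$ denotes the expected return of $\pi$ when trajectories are generated by $M$; the true model is $M^\star=(P^\star,R^\star)$. Data consists of i.i.d. trajectories $(s_1,a_1,r_1,\ldots,s_H,a_H,r_H)$ generated by running a behavior policy $\pi_{\mathcal{D}}$ in $M^\star$, with $r_h=R^\star(s_h,a_h)$. The multi-step reward-prediction loss of a model $M=(P,R)$ on one trajectory is defined as follows: for each $h\in\{1,\ldots,H\}$, set $\hat s_h=s_h$ and for $h'=h,\ldots,H$ let $\hat r_{h'}=R(\hat s_{h'},a_{h'})$ and sample $\hat s_{h'+1}\sim P(\cdot\mid \hat s_{h'},a_{h'})$ (reusing the data actions $a_{h'}$); the loss is $\sum_{h=1}^H\sum_{h'=h}^H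 (r_{h'}-\hat r_{h'})^2$. The empirical loss averages this over data trajectories; the expected loss takes expectation over the data trajectory (drawn from $\pi_{\mathcal{D}}$ in $M^\star$) and over the model's sampling. *)

theory Defs
  imports "HOL-Probability.Probability"
begin

text \<open>A (Markov, possibly stochastic, time-dependent) policy is pol :: nat => 's => 'a pmf,
  indexed by the time step h (starting at 1).
  A trajectory is the list [(s_1,a_1),...,(s_H,a_H)]; the reward r_h = R(s_h,a_h) is
  a deterministic function of it.\<close>

fun traj :: "('s \<Rightarrow> 'a \<Rightarrow> 's pmf) \<Rightarrow> (nat \<Rightarrow> 's \<Rightarrow> 'a pmf) \<Rightarrow> nat \<Rightarrow> 's \<Rightarrow> nat
              \<Rightarrow> ('s \<times> 'a) list pmf" where
  "traj P pol h s 0 = return_pmf []"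
| "traj P pol h s (Suc n) =
     do { a \<leftarrow> pol h s; s' \<leftarrow> P s a; rest \<leftarrow> traj P pol (Suc h) s' n; return_pmf ((s, a) # rest) }"

definition traj_dist :: "('s \<Rightarrow> 'a \<Rightarrow> 's pmf) \<Rightarrow> (nat \<Rightarrow> 's \<Rightarrow> 'a pmf) \<Rightarrow> 's \<Rightarrow> nat
                          \<Rightarrow> ('s \<times> 'a) list pmf" where
  "traj_dist P pol s1 H = traj P pol 1 s1 H"

definition J :: "('s \<Rightarrow> 'a \<Rightarrow> 's pmf) \<Rightarrow> ('s \<Rightarrow> 'a \<Rightarrow> real) \<Rightarrow> (nat \<Rightarrow> 's \<Rightarrow> 'a pmf) \<Rightarrow> 's \<Rightarrow> nat \<Rightarrow> real" where
  "J P R pol s1 H =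
     measure_pmf.expectation (traj_dist P pol s1 H) (\<lambda>\<tau>. \<Sum>(s, a)\<leftarrow>\<tau>. R s a)"

fun rollout :: "('s \<Rightarrow> 'a \<Rightarrow> 's pmf) \<Rightarrow> ('s \<Rightarrow> 'a \<Rightarrow> real) \<Rightarrow> 's \<Rightarrow> 'a list \<Rightarrow> real list pmf" where
  "rollout P R s [] = return_pmf []"
| "rollout P R s (a # as) =
     do { s' \<leftarrow> P s a; rest \<leftarrow> rollout P R s' as; return_pmf (R s a # rest) }"

definition traj_loss :: "('s \<Rightarrow> 'a \<Rightarrow> real) \<Rightarrow> ('s \<Rightarrow> 'a \<Rightarrow> 's pmf) \<Rightarrow> ('s \<Rightarrow> 'a \<Rightarrow> real)
                          \<Rightarrow> ('s \<times> 'a) list \<Rightarrow> real" where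
  "traj_loss Rstar P R \<tau> =
     (\<Sum>h<length \<tau>.
        measure_pmf.expectation (rollout P R (fst (\<tau> ! h)) (map snd (drop h \<tau>)))
          (\<lambda>rhat. \<Sum>(r, r')\<leftarrow>zip (map (\<lambda>(s, a). Rstar s a) (drop h \<tau>)) rhat. (r - r')\<^sup>2))"

definition expected_loss :: "('s \<Rightarrow> 'a \<Rightarrow> 's pmf) \<Rightarrow> ('s \<Rightarrow> 'a \<Rightarrow> real) \<Rightarrow> (nat \<Rightarrow> 's \<Rightarrow> 'a pmf) \<Rightarrow> 's \<Rightarrow> nat
     \<Rightarrow> ('s \<Rightarrow> 'a \<Rightarrow> 's pmf) \<Rightarrow> ('s \<Rightarrow> 'a \<Rightarrow> real) \<Rightarrow> real" where
  "expected_loss Pstar Rstar polD s1 H P R =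
     measure_pmf.expectation (traj_dist Pstar polD s1 H) (traj_loss Rstar P R)"

text \<open>Stochastic transitions: on some trajectory that can occur in the data, some non-final
  step uses a state-action pair whose transition is not a point mass.\<close>
definition stochastic_on_data :: "('s \<Rightarrow> 'a \<Rightarrow> 's pmf) \<Rightarrow> (nat \<Rightarrow> 's \<Rightarrow> 'a pmf) \<Rightarrow> 's \<Rightarrow> nat \<Rightarrow> bool" where
  "stochastic_on_data P polD s1 H \<longleftrightarrow>
     (\<exists>\<tau>\<in>set_pmf (traj_dist P polD s1 H). \<exists>i. Suc i < length \<tau> \<and>
        \<not> (\<exists>s'. P (fst (\<tau> ! i)) (snd (\<tau> ! i)) = return_pmf s'))"

end

theory Submission
  imports Defs
begin

text \<open>In the true MDP the first step leads by a fair coin to a state with reward 1 or 0. The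
  multi-step loss compares the observed second reward with one predicted from an independent
  rollout, so the true model pays for the coin twice: its loss is the variance 1/4 doubled.
  A deterministic model that moves to a fresh state with reward c pays only
  (c^2 + (1 - c)^2) / 2, which is smaller for every 0 < c < 1; for c \<noteq> 1/2 it
  also misjudges the return 1/2 of the data policy as c.\<close>

lemma rollout_single: "rollout P R s [a] = return_pmf [R s a]"
  by (simp add: bind_return_pmf)

lemma rollout_two: "rollout P R s [a, b] = map_pmf (\<lambda>s'. [R s a, R s' b]) (P s a)"
  by (simp add: rollout_single map_pmf_def bind_return_pmf)

lemma traj_loss_Nil: "traj_loss Rstar P R [] = 0"
  by (simp add: traj_loss_def)

lemma traj_loss_Cons:
  "traj_loss Rstar P R ((s, a) # \<tau>) =
     measure_pmf.expectation (rollout P R s (a # map snd \<tau>))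
       (\<lambda>rhat. \<Sum>(r, r')\<leftarrow>zip (Rstar s a # map (\<lambda>(s, a). Rstar s a) \<tau>) rhat. (r - r')\<^sup>2)
     + traj_loss Rstar P R \<tau>"
  unfolding traj_loss_def length_Cons sum.lessThan_Suc_shift by (simp del: rollout.simps)

lemma traj_loss_two:
  "traj_loss Rstar P R [(s, a), (s', b)] =
     measure_pmf.expectation (P s a) (\<lambda>s''. (Rstar s a - R s a)\<^sup>2 + (Rstar s' b - R s'' b)\<^sup>2)
     + (Rstar s' b - R s' b)\<^sup>2"
  by (simp del: rollout.simps add: traj_loss_Cons traj_loss_Nil rollout_two rollout_single)

lemma traj_dist_two:
  "traj_dist P pol s1 2 =
     do { a \<leftarrow> pol 1 s1; s \<leftarrow> P s1 a; b \<leftarrow> pol 2 s; return_pmf [(s1, a), (s, b)] }"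
  by (simp add: traj_dist_def numeral_2_eq_2 bind_return_pmf bind_assoc_pmf)

definition coin_kernel :: "nat \<Rightarrow> nat \<Rightarrow> nat pmf" where
  "coin_kernel s a = (if s = 0 then pmf_of_set {1, 2} else return_pmf 0)"

definition coin_reward :: "nat \<Rightarrow> nat \<Rightarrow> real" where
  "coin_reward s a = (if s = 1 then 1 else 0)"

definition det_kernel :: "nat \<Rightarrow> nat \<Rightarrow> nat pmf" where
  "det_kernel s a = return_pmf (if s = 0 then 3 else 0)"

definition det_reward :: "real \<Rightarrow> nat \<Rightarrow> nat \<Rightarrow> real" where
  "det_reward c s a = (if s = 1 then 1 else if s = 3 then c else 0)"

definition zero_policy :: "nat \<Rightarrow> nat \<Rightarrow> nat pmf" where
  "zero_policy h s = return_pmf 0"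

lemma traj_dist_coin:
  "traj_dist coin_kernel zero_policy 0 2 = map_pmf (\<lambda>s. [(0, 0), (s, 0)]) (pmf_of_set {1, 2})"
  by (simp add: traj_dist_two coin_kernel_def zero_policy_def map_pmf_def bind_return_pmf)

lemma traj_dist_det: "traj_dist det_kernel zero_policy 0 2 = return_pmf [(0, 0), (3, 0)]"
  by (simp add: traj_dist_two det_kernel_def zero_policy_def bind_return_pmf)

lemma expected_loss_coin:
  "expected_loss coin_kernel coin_reward zero_policy 0 2 coin_kernel coin_reward = 1 / 2"
  by (simp add: expected_loss_def traj_dist_coin traj_loss_two integral_pmf_of_set
      coin_kernel_def coin_reward_def)

lemma expected_loss_det:
  "expected_loss coin_kernel coin_reward zero_policy 0 2 det_kernel (det_reward c)
     = (c\<^sup>2 + (1 - c)\<^sup>2) / 2"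
  by (simp add: expected_loss_def traj_dist_coin traj_loss_two integral_pmf_of_set
      det_kernel_def det_reward_def coin_reward_def)

lemma J_coin: "J coin_kernel coin_reward zero_policy 0 2 = 1 / 2"
  by (simp add: J_def traj_dist_coin integral_pmf_of_set coin_reward_def)

lemma J_det: "J det_kernel (det_reward c) zero_policy 0 2 = c"
  by (simp add: J_def traj_dist_det det_reward_def)

lemma stochastic_on_data_coin: "stochastic_on_data coin_kernel zero_policy 0 2"
proof -
  have "pmf_of_set {1, 2} \<noteq> return_pmf s" for s :: nat
  proof
    assume "pmf_of_set {1, 2} = return_pmf s"
    then have "set_pmf (pmf_of_set {1, 2}) = {s}"
      by simp
    then have "{1, 2} = {s}"
      by simp
    then show False
      by (auto dest: equalityD1)
  qed
  then show ?thesis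
    unfolding stochastic_on_data_def traj_dist_coin
    by (force simp: coin_kernel_def)
qed

theorem proposition1:
  shows "\<exists>(H::nat) (Rmax::real) (s1::nat) (Pstar::nat \<Rightarrow> nat \<Rightarrow> nat pmf) (Rstar::nat \<Rightarrow> nat \<Rightarrow> real)
            (polD::nat \<Rightarrow> nat \<Rightarrow> nat pmf) (P::nat \<Rightarrow> nat \<Rightarrow> nat pmf) (R::nat \<Rightarrow> nat \<Rightarrow> real)
            (pol::nat \<Rightarrow> nat \<Rightarrow> nat pmf).
     1 \<le> H \<and> 0 < Rmax \<and>
     (\<forall>s a. 0 \<le> Rstar s a \<and> Rstar s a \<le> Rmax) \<and>
     (\<forall>s a. 0 \<le> R s a \<and> R s a \<le> Rmax) \<and>
     stochastic_on_data Pstar polD s1 H \<and>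
     (P, R) \<noteq> (Pstar, Rstar) \<and>
     expected_loss Pstar Rstar polD s1 H P R < expected_loss Pstar Rstar polD s1 H Pstar Rstar \<and>
     J P R pol s1 H \<noteq> J Pstar Rstar pol s1 H"
proof -
  define c :: real where "c = 1 / 3"
  have coin_reward_bounds: "\<forall>s a. 0 \<le> coin_reward s a \<and> coin_reward s a \<le> 1"
    by (simp add: coin_reward_def)
  have det_reward_bounds: "\<forall>s a. 0 \<le> det_reward c s a \<and> det_reward c s a \<le> 1"
    by (simp add: det_reward_def c_def)
  have "det_reward c 3 0 \<noteq> coin_reward 3 0"
    by (simp add: det_reward_def coin_reward_def c_def)
  then have models_differ: "(det_kernel, det_reward c) \<noteq> (coin_kernel, coin_reward)"
    by auto
  have loss_smaller:
    "expected_loss coin_kernel coin_reward zero_policy 0 2 det_kernel (det_reward c)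
       < expected_loss coin_kernel coin_reward zero_policy 0 2 coin_kernel coin_reward"
    by (simp add: expected_loss_coin expected_loss_det c_def power2_eq_square)
  have return_wrong:
    "J det_kernel (det_reward c) zero_policy 0 2 \<noteq> J coin_kernel coin_reward zero_policy 0 2"
    by (simp add: J_coin J_det c_def)
  show ?thesis
    by (intro exI[of _ 2] exI[of _ 1] exI[of _ 0] exI[of _ coin_kernel] exI[of _ coin_reward]
        exI[of _ zero_policy] exI[of _ det_kernel] exI[of _ "det_reward c"] exI[of _ zero_policy]
        conjI coin_reward_bounds det_reward_bounds stochastic_on_data_coin models_differ
        loss_smaller return_wrong) simp_all
qed

end
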